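(* Let $X$ be a set and $B=(B,+,0)$ a unitary magma. For every retraction point $\mathcal A=(A,k,q,s,p)$ from $X$ to $B$, define $\Phi(\mathcal A)\colon X\times B\times X\times B\to X$ by $$\Phi(\mathcal A)(x,b,x',b')=q\big((k(x)+s(b))+(k(x')+s(b'))\big).$$ Then $\Phi(\mathcal A)\in\mathbf{Act}(X,B)$, and for any two retraction points $\mathcal A,\mathcal A'$ from $X$ to $B$ one has $\mathcal A\sim\mathcal A'$ if and only if $\Phi(\mathcal A)=\Phi(\mathcal A')$. Consequently $\Phi$ induces a bijection $$\mathbf{Ptr}(X,B)/\!\sim\;\cong\;\mathbf{Act}(X,B).$$
   Context: A unitary magma is a set with a binary operation $+$ and an element $0$ with $b+0=b=0+b$ for all $b$; morphisms preserve $+$ and $0$. Given a set $X$ and a unitary magma $B=(B,+,0)$, a retraction point from $X$ to $B$ is a tuple $(A,k,q,s,p)$ where $A=(A,+,0)$ is a unitary magma, $k\colon X\to A$ and $q\colon A\to X$ are maps, $s\colon B\to A$ and $p\colon A\to B$ are morphisms of unitary magmas, and $p(s(b))=b$, $q(k(x))=x$, $p(k(x))=0$, $q(s(b))=q(0)$, and $k(q(a))+s(p(a))=a$ for all $x\in X$, $b\in B$, $a\in A$. $\mathbf{Ptr}(X,B)$ denotes the collection of all retraction points from $X$ to $B$. Two retraction points $(A,k,q,s,p)$ and $(A',k',q',s',p')$ from $X$ to $B$ are equivalent, written $\sim$, if there is a morphism of unitary magmas $\alpha\colon A\to A'$ with $\alpha k=k'$, $\alpha s=s'$ and $q'\alpha=q$.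 A $B$-action is a pair $(X,\varphi)$ with $X$ a set and $\varphi\colon X\times B\times X\times B\to X$ a map such that: (1) there is an element $0\in X$ with $\varphi(x,0,0,0)=x=\varphi(0,0,x,0)$ for all $x\in X$; (2) $\varphi(x,b,0,0)=\varphi(x,0,0,b)=\varphi(0,0,x,b)$ for all $x\in X,b\in B$; (3) $\varphi(0,b,0,b')=0$ for all $b,b'\in B$; (4) writing $\varphi_{00}(x,b)=\varphi(x,0,0,b)$, for all $x,x'\in X$, $b,b'\in B$: $\varphi(x,b,x',b')=\varphi_{00}\big(\varphi(\varphi_{00}(x,b),b,\varphi_{00}(x',b'),b'),\,b+b'\big)$. $\mathbf{Act}(X,B)$ denotes the set of all maps $\varphi$ such that $(X,\varphi)$ is a $B$-action. *)

theory Defs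
  imports Main
begin

definition unitary_magma :: "'a set \<Rightarrow> ('a \<Rightarrow> 'a \<Rightarrow> 'a) \<Rightarrow> 'a \<Rightarrow> bool" where
  "unitary_magma A f z \<longleftrightarrow> z \<in> A \<and> (\<forall>a\<in>A. \<forall>b\<in>A. f a b \<in> A) \<and>
     (\<forall>b\<in>A. f b z = b \<and> f z b = b)"

definition magma_hom :: "'a set \<Rightarrow> ('a \<Rightarrow> 'a \<Rightarrow> 'a) \<Rightarrow> 'a \<Rightarrow>
     'c set \<Rightarrow> ('c \<Rightarrow> 'c \<Rightarrow> 'c) \<Rightarrow> 'c \<Rightarrow> ('a \<Rightarrow> 'c) \<Rightarrow> bool" where
  "magma_hom A f z A' f' z' h \<longleftrightarrow> (\<forall>a\<in>A. h a \<in> A') \<and>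
     (\<forall>a\<in>A. \<forall>b\<in>A. h (f a b) = f' (h a) (h b)) \<and> h z = z'"

text \<open>A candidate retraction point (A,k,q,s,p) from X (a type 'x) to B (a type 'b);
  the magma A is given by a carrier set, an operation and a unit.\<close>
record ('x, 'b, 'a) rpoint =
  carr :: "'a set"
  plus :: "'a \<Rightarrow> 'a \<Rightarrow> 'a"
  zer :: "'a"
  kk :: "'x \<Rightarrow> 'a"
  qq :: "'a \<Rightarrow> 'x"
  ss :: "'b \<Rightarrow> 'a"
  pp :: "'a \<Rightarrow> 'b"

text \<open>B = (UNIV :: 'b set, addB, zB).\<close>
definition retraction_point :: "('b \<Rightarrow> 'b \<Rightarrow> 'b) \<Rightarrow> 'b \<Rightarrow> ('x, 'b, 'a) rpoint \<Rightarrow> bool" where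
  "retraction_point addB zB R \<longleftrightarrow>
     unitary_magma (carr R) (plus R) (zer R) \<and>
     (\<forall>x. kk R x \<in> carr R) \<and>
     magma_hom UNIV addB zB (carr R) (plus R) (zer R) (ss R) \<and>
     magma_hom (carr R) (plus R) (zer R) UNIV addB zB (pp R) \<and>
     (\<forall>b. pp R (ss R b) = b) \<and>
     (\<forall>x. qq R (kk R x) = x) \<and>
     (\<forall>x. pp R (kk R x) = zB) \<and>
     (\<forall>b. qq R (ss R b) = qq R (zer R)) \<and>
     (\<forall>a\<in>carr R. plus R (kk R (qq R a)) (ss R (pp R a)) = a)"

definition rp_equiv :: "('x, 'b, 'a) rpoint \<Rightarrow> ('x, 'b, 'c) rpoint \<Rightarrow> bool" where
  "rp_equiv R R' \<longleftrightarrow> (\<exists>\<alpha> :: 'a \<Rightarrow> 'c.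
     magma_hom (carr R) (plus R) (zer R) (carr R') (plus R') (zer R') \<alpha> \<and>
     (\<forall>x. \<alpha> (kk R x) = kk R' x) \<and>
     (\<forall>b. \<alpha> (ss R b) = ss R' b) \<and>
     (\<forall>a\<in>carr R. qq R' (\<alpha> a) = qq R a))"

definition Phi :: "('x, 'b, 'a) rpoint \<Rightarrow> ('x \<Rightarrow> 'b \<Rightarrow> 'x \<Rightarrow> 'b \<Rightarrow> 'x)" where
  "Phi R = (\<lambda>x b x' b'. qq R (plus R (plus R (kk R x) (ss R b)) (plus R (kk R x') (ss R b'))))"

definition is_action :: "('b \<Rightarrow> 'b \<Rightarrow> 'b) \<Rightarrow> 'b \<Rightarrow> ('x \<Rightarrow> 'b \<Rightarrow> 'x \<Rightarrow> 'b \<Rightarrow> 'x) \<Rightarrow> bool" where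
  "is_action addB zB \<phi> \<longleftrightarrow> (\<exists>e::'x.
     (\<forall>x. \<phi> x zB e zB = x \<and> \<phi> e zB x zB = x) \<and>
     (\<forall>x b. \<phi> x b e zB = \<phi> x zB e b \<and> \<phi> x zB e b = \<phi> e zB x b) \<and>
     (\<forall>b b'. \<phi> e b e b' = e) \<and>
     (\<forall>x x' b b'. \<phi> x b x' b' =
        \<phi> (\<phi> (\<phi> x zB e b) b (\<phi> x' zB e b') b') zB e (addB b b')))"

definition Act :: "('b \<Rightarrow> 'b \<Rightarrow> 'b) \<Rightarrow> 'b \<Rightarrow> ('x \<Rightarrow> 'b \<Rightarrow> 'x \<Rightarrow> 'b \<Rightarrow> 'x) set" where
  "Act addB zB = {\<phi>. is_action addB zB \<phi>}"

end

theory Submission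
  imports Defs
begin

(* Every element of a retraction point decomposes as a = k(q a) + s(p a), so A is determined by
   the pairs (q a, p a) in X \<times> B, and Phi records the addition of A transported to such pairs.
   Hence a morphism between retraction points is forced to be a \<mapsto> k'(q a) + s'(p a), and it is
   a morphism exactly when the two retraction points have the same Phi.  Conversely, an action
   \<phi> with zero e is realised by the pairs (x, b) with \<phi>(x, 0, e, b) = x, added by
   (x, b) + (x', b') = (\<phi>(x, b, x', b'), b + b'). *)

lemma bij_betw_quotient_kernel_on:
  "bij_betw (\<lambda>C. the_elem (f ` C)) (A // {(x, y). x \<in> A \<and> y \<in> A \<and> f x = f y}) (f ` A)"
proof -
  let ?r = "{(x, y). x \<in> A \<and> y \<in> A \<and> f x = f y}"
  have class_eq: "?r `` {x} = {y \<in> A. f y = f x}" if "x \<in> A" for x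
    using that by auto
  have class_image: "the_elem (f ` (?r `` {x})) = f x" if "x \<in> A" for x
    unfolding class_eq[OF that] using that by (intro the_elem_image_unique) auto
  have quotient_eq: "A // ?r = (\<lambda>x. ?r `` {x}) ` A"
    unfolding quotient_def by blast
  show ?thesis
    unfolding bij_betw_def
  proof
    show "inj_on (\<lambda>C. the_elem (f ` C)) (A // ?r)"
    proof (rule inj_onI)
      fix C D assume "C \<in> A // ?r" "D \<in> A // ?r" and eq: "the_elem (f ` C) = the_elem (f ` D)"
      then obtain x y where "x \<in> A" "C = ?r `` {x}" "y \<in> A" "D = ?r `` {y}"
        by (meson quotientE)
      moreover from this have "f x = f y"
        using eq class_image by simp
      ultimately show "C = D"
        by (simp only: class_eq)
    qed
    have "(\<lambda>C. the_elem (f ` C)) ` (A // ?r) = (\<lambda>x. the_elem (f ` (?r `` {x}))) ` A"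
      by (simp only: quotient_eq image_image)
    also have "\<dots> = f ` A"
      using class_image by (rule image_cong[OF refl])
    finally show "(\<lambda>C. the_elem (f ` C)) ` (A // ?r) = f ` A" .
  qed
qed

lemma unitary_magma_UNIV_unit:
  assumes "unitary_magma UNIV f z"
  shows "f b z = b" "f z b = b"
  using assms unfolding unitary_magma_def by auto

context
  fixes addB :: "'b \<Rightarrow> 'b \<Rightarrow> 'b" and zB :: 'b
begin

lemma retraction_pointD:
  assumes "retraction_point addB zB R"
  shows "zer R \<in> carr R" "\<And>a b. a \<in> carr R \<Longrightarrow> b \<in> carr R \<Longrightarrow> plus R a b \<in> carr R"
    "\<And>a. a \<in> carr R \<Longrightarrow> plus R a (zer R) = a" "\<And>a. a \<in> carr R \<Longrightarrow> plus R (zer R) a = a"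
    "\<And>x. kk R x \<in> carr R" "\<And>b. ss R b \<in> carr R"
    "\<And>b b'. ss R (addB b b') = plus R (ss R b) (ss R b')" "ss R zB = zer R"
    "\<And>a b. a \<in> carr R \<Longrightarrow> b \<in> carr R \<Longrightarrow> pp R (plus R a b) = addB (pp R a) (pp R b)"
    "pp R (zer R) = zB"
    "\<And>b. pp R (ss R b) = b" "\<And>x. qq R (kk R x) = x" "\<And>x. pp R (kk R x) = zB"
    "\<And>b. qq R (ss R b) = qq R (zer R)"
    "\<And>a. a \<in> carr R \<Longrightarrow> plus R (kk R (qq R a)) (ss R (pp R a)) = a"
  using assms unfolding retraction_point_def unitary_magma_def magma_hom_def by auto

lemma kk_qq_zer:
  assumes "retraction_point addB zB R"
  shows "kk R (qq R (zer R)) = zer R"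
  using retraction_pointD[OF assms] retraction_pointD(15)[OF assms retraction_pointD(1)[OF assms]]
  by simp

lemma pp_kk_plus_ss:
  assumes "retraction_point addB zB R" "unitary_magma UNIV addB zB"
  shows "pp R (plus R (kk R x) (ss R b)) = b"
  using retraction_pointD[OF assms(1)] unitary_magma_UNIV_unit[OF assms(2)] by simp

lemma kk_qq_plus_ss:
  assumes "retraction_point addB zB R" "unitary_magma UNIV addB zB"
  shows "plus R (kk R (qq R (plus R (kk R x) (ss R b)))) (ss R b) = plus R (kk R x) (ss R b)"
  using retraction_pointD(15)[OF assms(1), of "plus R (kk R x) (ss R b)"]
    retraction_pointD[OF assms(1)] pp_kk_plus_ss[OF assms]
  by simp

lemma Phi_zero_simps:
  assumes "retraction_point addB zB R"
  shows "Phi R x zB (qq R (zer R)) zB = x" "Phi R (qq R (zer R)) zB x zB = x"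
    "Phi R x b (qq R (zer R)) zB = qq R (plus R (kk R x) (ss R b))"
    "Phi R x zB (qq R (zer R)) b = qq R (plus R (kk R x) (ss R b))"
    "Phi R (qq R (zer R)) zB x b = qq R (plus R (kk R x) (ss R b))"
  unfolding Phi_def using retraction_pointD[OF assms] kk_qq_zer[OF assms] by simp_all

lemma Phi_retract_args:
  assumes R: "retraction_point addB zB R" and B: "unitary_magma UNIV addB zB"
  shows "Phi R (Phi R x zB (qq R (zer R)) b) b (Phi R x' zB (qq R (zer R)) b') b' = Phi R x b x' b'"
  unfolding Phi_zero_simps[OF R] unfolding Phi_def kk_qq_plus_ss[OF R B] ..

lemma is_action_Phi:
  assumes R: "retraction_point addB zB R" and B: "unitary_magma UNIV addB zB"
  shows "is_action addB zB (Phi R)"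
  unfolding is_action_def
proof (intro exI[of _ "qq R (zer R)"] conjI allI)
  let ?e = "qq R (zer R)"
  note D = retraction_pointD[OF R]
  fix x x' b b'
  show "Phi R x zB ?e zB = x" "Phi R ?e zB x zB = x"
    "Phi R x b ?e zB = Phi R x zB ?e b" "Phi R x zB ?e b = Phi R ?e zB x b"
    using Phi_zero_simps[OF R] D by simp_all
  have "Phi R ?e b ?e b' = qq R (ss R (addB b b'))"
    unfolding Phi_def using D kk_qq_zer[OF R] by simp
  then show "Phi R ?e b ?e b' = ?e"
    using D(14) by simp
  let ?c = "plus R (plus R (kk R x) (ss R b)) (plus R (kk R x') (ss R b'))"
  have c: "?c \<in> carr R" "pp R ?c = addB b b'"
    using D pp_kk_plus_ss[OF R B] by simp_all
  have "Phi R (Phi R x b x' b') zB ?e (addB b b') = qq R (plus R (kk R (qq R ?c)) (ss R (pp R ?c)))"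
    unfolding Phi_zero_simps[OF R] c(2) by (simp add: Phi_def)
  also have "\<dots> = Phi R x b x' b'"
    unfolding D(15)[OF c(1)] by (simp add: Phi_def)
  finally show "Phi R x b x' b' = Phi R (Phi R (Phi R x zB ?e b) b (Phi R x' zB ?e b') b') zB ?e (addB b b')"
    unfolding Phi_retract_args[OF R B] ..
qed

lemma Phi_eq_if_rp_equiv:
  assumes R: "retraction_point addB zB R" and "rp_equiv R R'"
  shows "Phi R = Phi R'"
proof (intro ext)
  obtain \<alpha> where hom: "magma_hom (carr R) (plus R) (zer R) (carr R') (plus R') (zer R') \<alpha>"
    and \<alpha>: "\<And>x. \<alpha> (kk R x) = kk R' x" "\<And>b. \<alpha> (ss R b) = ss R' b"
      "\<And>a. a \<in> carr R \<Longrightarrow> qq R' (\<alpha> a) = qq R a"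
    using \<open>rp_equiv R R'\<close> unfolding rp_equiv_def by blast
  note D = retraction_pointD[OF R]
  fix x b x' b'
  let ?c = "plus R (plus R (kk R x) (ss R b)) (plus R (kk R x') (ss R b'))"
  have "\<alpha> ?c = plus R' (plus R' (kk R' x) (ss R' b)) (plus R' (kk R' x') (ss R' b'))"
    using hom D \<alpha> unfolding magma_hom_def by simp
  then show "Phi R x b x' b' = Phi R' x b x' b'"
    unfolding Phi_def using \<alpha>(3)[of ?c] D by simp
qed

lemma rp_equiv_if_Phi_eq:
  assumes R: "retraction_point addB zB R" and R': "retraction_point addB zB R'"
    and B: "unitary_magma UNIV addB zB" and Phi_eq: "Phi R = Phi R'"
  shows "rp_equiv R R'"
proof -
  note D = retraction_pointD[OF R] and D' = retraction_pointD[OF R']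
  have zero_eq: "qq R (zer R) = qq R' (zer R')"
    using Phi_zero_simps(1)[OF R, of "qq R' (zer R')"] Phi_zero_simps(2)[OF R'] Phi_eq by simp
  define \<alpha> where "\<alpha> a = plus R' (kk R' (qq R a)) (ss R' (pp R a))" for a
  have \<alpha>_plus: "\<alpha> (plus R a c) = plus R' (\<alpha> a) (\<alpha> c)" if a: "a \<in> carr R" and c: "c \<in> carr R" for a c
  proof -
    let ?c' = "plus R' (\<alpha> a) (\<alpha> c)"
    have "qq R (plus R a c) = Phi R (qq R a) (pp R a) (qq R c) (pp R c)"
      unfolding Phi_def using D(15)[OF a] D(15)[OF c] by simp
    also have "\<dots> = qq R' ?c'"
      unfolding Phi_eq unfolding Phi_def \<alpha>_def ..
    finally have "qq R (plus R a c) = qq R' ?c'" .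
    moreover have "pp R (plus R a c) = pp R' ?c'"
      unfolding \<alpha>_def using D(9)[OF a c] D' pp_kk_plus_ss[OF R' B] by simp
    moreover have "?c' \<in> carr R'"
      unfolding \<alpha>_def using D' by simp
    ultimately show ?thesis
      unfolding \<alpha>_def[of "plus R a c"] using D'(15) by simp
  qed
  have "magma_hom (carr R) (plus R) (zer R) (carr R') (plus R') (zer R') \<alpha>"
    unfolding magma_hom_def using \<alpha>_plus D D' kk_qq_zer[OF R'] zero_eq by (simp add: \<alpha>_def)
  moreover have "\<alpha> (kk R x) = kk R' x" "\<alpha> (ss R b) = ss R' b" for x b
    unfolding \<alpha>_def using D D' kk_qq_zer[OF R'] zero_eq by simp_all
  moreover have "qq R' (\<alpha> a) = qq R a" if "a \<in> carr R" for a
  proof -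
    have "qq R' (\<alpha> a) = Phi R' (qq R a) (pp R a) (qq R' (zer R')) zB"
      unfolding \<alpha>_def Phi_zero_simps(3)[OF R'] ..
    also have "\<dots> = qq R a"
      unfolding Phi_eq[symmetric] zero_eq[symmetric] Phi_zero_simps(3)[OF R] D(15)[OF that] ..
    finally show ?thesis .
  qed
  ultimately show ?thesis
    unfolding rp_equiv_def by blast
qed

lemma rp_equiv_iff_Phi_eq:
  assumes "retraction_point addB zB R" "retraction_point addB zB R'" "unitary_magma UNIV addB zB"
  shows "rp_equiv R R' \<longleftrightarrow> Phi R = Phi R'"
  using Phi_eq_if_rp_equiv[OF assms(1)] rp_equiv_if_Phi_eq[OF assms] by blast

end

definition action_rpoint ::
    "('b \<Rightarrow> 'b \<Rightarrow> 'b) \<Rightarrow> 'b \<Rightarrow> ('x \<Rightarrow> 'b \<Rightarrow> 'x \<Rightarrow> 'b \<Rightarrow> 'x) \<Rightarrow> 'x \<Rightarrow> ('x, 'b, 'x \<times> 'b) rpoint" where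
  "action_rpoint addB zB \<phi> e =
    \<lparr>carr = {(x, b). \<phi> x zB e b = x}, plus = (\<lambda>(x, b) (x', b'). (\<phi> x b x' b', addB b b')),
     zer = (e, zB), kk = (\<lambda>x. (x, zB)), qq = fst, ss = (\<lambda>b. (e, b)), pp = snd\<rparr>"

locale action_with_zero =
  fixes addB :: "'b \<Rightarrow> 'b \<Rightarrow> 'b" and zB :: 'b and \<phi> :: "'x \<Rightarrow> 'b \<Rightarrow> 'x \<Rightarrow> 'b \<Rightarrow> 'x" and e :: 'x
  assumes unitary_B: "unitary_magma UNIV addB zB"
    and unit_left: "\<And>x. \<phi> x zB e zB = x" and unit_right: "\<And>x. \<phi> e zB x zB = x"
    and move_left: "\<And>x b. \<phi> x b e zB = \<phi> x zB e b"
    and move_right: "\<And>x b. \<phi> x zB e b = \<phi> e zB x b"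
    and zero_absorb: "\<And>b b'. \<phi> e b e b' = e"
    and retract_sum: "\<And>x x' b b'.
      \<phi> x b x' b' = \<phi> (\<phi> (\<phi> x zB e b) b (\<phi> x' zB e b') b') zB e (addB b b')"
begin

lemma retract_idem: "\<phi> (\<phi> x zB e b) zB e b = \<phi> x zB e b"
  using retract_sum[of x zB e b]
  by (simp only: unit_left zero_absorb unitary_magma_UNIV_unit[OF unitary_B])

lemma retract_args: "\<phi> (\<phi> x zB e b) b (\<phi> x' zB e b') b' = \<phi> x b x' b'"
  using retract_sum[of "\<phi> x zB e b" b "\<phi> x' zB e b'" b'] retract_sum[of x b x' b']
  by (simp only: retract_idem)

lemma retraction_point_action_rpoint: "retraction_point addB zB (action_rpoint addB zB \<phi> e)"
proof -
  note B_unit = unitary_magma_UNIV_unit[OF unitary_B]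
  have closed: "\<phi> (\<phi> x b x' b') zB e (addB b b') = \<phi> x b x' b'"
    if "\<phi> x zB e b = x" "\<phi> x' zB e b' = x'" for x b x' b'
    using retract_sum[of x b x' b'] that by simp
  have zero_unit: "\<phi> x b e zB = x" "\<phi> e zB x b = x" if "\<phi> x zB e b = x" for x b
    using that move_left move_right by simp_all
  let ?A = "action_rpoint addB zB \<phi> e"
  show ?thesis
    unfolding retraction_point_def
  proof (intro conjI)
    show "unitary_magma (carr ?A) (plus ?A) (zer ?A)"
      unfolding unitary_magma_def action_rpoint_def
      using closed zero_unit unit_left B_unit by auto
    show "magma_hom UNIV addB zB (carr ?A) (plus ?A) (zer ?A) (ss ?A)"
      unfolding magma_hom_def action_rpoint_def using zero_absorb unit_left by simp
    show "magma_hom (carr ?A) (plus ?A) (zer ?A) UNIV addB zB (pp ?A)"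
      unfolding magma_hom_def action_rpoint_def by auto
  qed (auto simp: action_rpoint_def unit_left B_unit)
qed

lemma Phi_action_rpoint: "Phi (action_rpoint addB zB \<phi> e) = \<phi>"
  unfolding Phi_def action_rpoint_def
  by (simp add: fun_eq_iff unitary_magma_UNIV_unit[OF unitary_B] retract_args)

end

lemma is_action_iff_action_with_zero:
  assumes "unitary_magma UNIV addB zB"
  shows "is_action addB zB \<phi> \<longleftrightarrow> (\<exists>e. action_with_zero addB zB \<phi> e)"
  using assms unfolding is_action_def action_with_zero_def by (simp add: all_conj_distrib)

lemma Phi_image_eq_Act:
  assumes B: "unitary_magma UNIV addB zB"
  shows "Phi ` {R :: ('x, 'b, 'x \<times> 'b) rpoint. retraction_point addB zB R} = Act addB zB"
proof (intro equalityI subsetI)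
  fix \<phi> assume "\<phi> \<in> Phi ` {R :: ('x, 'b, 'x \<times> 'b) rpoint. retraction_point addB zB R}"
  then obtain R :: "('x, 'b, 'x \<times> 'b) rpoint" where "retraction_point addB zB R" "\<phi> = Phi R"
    by blast
  then show "\<phi> \<in> Act addB zB"
    unfolding Act_def using is_action_Phi[OF _ B] by simp
next
  fix \<phi> :: "'x \<Rightarrow> 'b \<Rightarrow> 'x \<Rightarrow> 'b \<Rightarrow> 'x"
  assume "\<phi> \<in> Act addB zB"
  then obtain e where "action_with_zero addB zB \<phi> e"
    unfolding Act_def mem_Collect_eq is_action_iff_action_with_zero[OF B] by blast
  then interpret action_with_zero addB zB \<phi> e .
  have "action_rpoint addB zB \<phi> e \<in> {R. retraction_point addB zB R}"
    using retraction_point_action_rpoint by simp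
  then show "\<phi> \<in> Phi ` {R :: ('x, 'b, 'x \<times> 'b) rpoint. retraction_point addB zB R}"
    by (rule rev_image_eqI) (rule Phi_action_rpoint[symmetric])
qed

theorem proposition5p3:
  fixes addB :: "'b \<Rightarrow> 'b \<Rightarrow> 'b" and zB :: 'b
  assumes "unitary_magma (UNIV :: 'b set) addB zB"
  shows "(\<forall>R :: ('x, 'b, 'a) rpoint. retraction_point addB zB R \<longrightarrow> Phi R \<in> Act addB zB)
    \<and> (\<forall>(R :: ('x, 'b, 'a) rpoint) (R' :: ('x, 'b, 'c) rpoint).
         retraction_point addB zB R \<and> retraction_point addB zB R' \<longrightarrow>
         (rp_equiv R R' \<longleftrightarrow> Phi R = Phi R'))
    \<and> (\<forall>\<phi> \<in> Act addB zB. \<exists>R :: ('x, 'b, 'x \<times> 'b) rpoint.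
         retraction_point addB zB R \<and> Phi R = \<phi>)
    \<and> bij_betw (\<lambda>C. the_elem (Phi ` C))
        ({R :: ('x, 'b, 'x \<times> 'b) rpoint. retraction_point addB zB R} //
         {(R, R'). retraction_point addB zB R \<and> retraction_point addB zB R' \<and> rp_equiv R R'})
        (Act addB zB)"
proof -
  note equiv_iff = rp_equiv_iff_Phi_eq[OF _ _ assms]
  let ?S = "{R :: ('x, 'b, 'x \<times> 'b) rpoint. retraction_point addB zB R}"
  have "{(R, R'). retraction_point addB zB R \<and> retraction_point addB zB R' \<and> rp_equiv R R'}
      = {(R, R'). R \<in> ?S \<and> R' \<in> ?S \<and> Phi R = Phi R'}"
    using equiv_iff by auto
  then have "bij_betw (\<lambda>C. the_elem (Phi ` C))
      (?S // {(R, R'). retraction_point addB zB R \<and> retraction_point addB zB R' \<and> rp_equiv R R'})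
      (Act addB zB)"
    unfolding Phi_image_eq_Act[OF assms, symmetric] by (simp only: bij_betw_quotient_kernel_on)
  moreover have "\<forall>\<phi> \<in> Act addB zB. \<exists>R \<in> ?S. Phi R = \<phi>"
    unfolding Phi_image_eq_Act[OF assms, symmetric] by blast
  ultimately show ?thesis
    using is_action_Phi[OF _ assms] equiv_iff unfolding Act_def by blast
qed

end
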